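(* Let $G$ be a compact group with Haar probability measure $\lambda$, let $\mathcal E$ be a finite partition of $G$ into Borel sets and let $y\in G$. Define, for $D\in Bor(G\times G)$, $$\nu_{y,\mathcal E}(D)=\sum_{E\in\mathcal E^\ast}\frac{\lambda_2\big(D\cap(E\times(E\oplus y))\big)}{\lambda(E)}.$$ Then $\nu_{y,\mathcal E}\in P(G\times G)$ and $\nu_{y,\mathcal E}(B\times G)=\nu_{y,\mathcal E}(G\times B)=\lambda(B)$ for every Borel set $B\subseteq G$.
   Context: $G=(G,\oplus)$ is a compact Hausdorff group (written additively but not necessarily commutative), $\lambda$ its (two-sided invariant) Haar probability measure, and $E\oplus y=\{e\oplus y: e\in E\}$. $\lambda_2$ is the product measure $\lambda\otimes\lambda$ on $G\times G$, extended uniquely to a regular Borel probability measure. $\mathcal E^\ast$ is the set of $E\in\mathcal E$ with $\lambda(E)>0$. $P(X)$ denotes the set of regular Borel probability measures on a compact space $X$. *)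

theory Defs
  imports "HOL-Probability.Probability"
begin

definition regular_borel :: "'a::topological_space measure \<Rightarrow> bool" where
  "regular_borel M \<longleftrightarrow> sets M = sets borel \<and>
     (\<forall>A \<in> sets borel.
        emeasure M A = (SUP K \<in> {K. compact K \<and> K \<subseteq> A}. emeasure M K) \<and>
        emeasure M A = (INF U \<in> {U. open U \<and> A \<subseteq> U}. emeasure M U))"

definition regular_borel_prob :: "'a::topological_space measure \<Rightarrow> bool" where
  "regular_borel_prob M \<longleftrightarrow> regular_borel M \<and> prob_space M"

definition haar_prob :: "'a::topological_group_add measure \<Rightarrow> bool" where
  "haar_prob lam \<longleftrightarrow> regular_borel_prob lam \<and>
     (\<forall>A \<in> sets borel. \<forall>y.
        emeasure lam ((\<lambda>x. x + y) ` A) = emeasure lam A \<and>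
        emeasure lam ((\<lambda>x. y + x) ` A) = emeasure lam A)"

text \<open>lambda_2: the unique regular Borel probability measure on G x G extending the
  product measure lambda (x) lambda (i.e. agreeing with it on measurable rectangles).\<close>
definition haar_prod :: "'a::topological_group_add measure \<Rightarrow> ('a \<times> 'a) measure \<Rightarrow> bool" where
  "haar_prod lam lam2 \<longleftrightarrow> regular_borel_prob lam2 \<and>
     (\<forall>A \<in> sets borel. \<forall>B \<in> sets borel.
        emeasure lam2 (A \<times> B) = emeasure lam A * emeasure lam B)"

definition finite_borel_partition :: "'a::topological_space set set \<Rightarrow> bool" where
  "finite_borel_partition \<E> \<longleftrightarrow> finite \<E> \<and> \<E> \<subseteq> sets borel \<and> {} \<notin> \<E> \<and>
     disjoint \<E> \<and> \<Union>\<E> = UNIV"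

end

theory Submission
  imports Defs
begin

(* \<nu> is the measure with density  \<Sum>\<^sub>E 1\<^bsub>E \<times> (E + y)\<^esub> / \<lambda>(E)  with respect to \<lambda>\<^sub>2, the sum
   running over the non-null cells E.  On rectangles every summand factorises, so
   \<nu>(B \<times> G) = \<Sum>\<^sub>E \<lambda>(B \<inter> E) = \<lambda>(B) by translation invariance of \<lambda>, and
   \<nu>(G \<times> B) = \<Sum>\<^sub>E \<lambda>(B \<inter> (E + y)) = \<lambda>(B) because the translates E + y again partition G;
   null cells contribute nothing to either sum.  Taking B = G shows that \<nu> is a probability
   measure, and regularity is inherited from \<lambda>\<^sub>2 because \<nu> \<le> C \<lambda>\<^sub>2 with C = \<Sum>\<^sub>E 1 / \<lambda>(E). *)

lemma emeasure_eq_SUP_iff_approx: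
  assumes M: "finite_measure M" and A: "A \<in> sets M" and Ks: "Ks \<subseteq> sets M"
    and sub: "\<And>K. K \<in> Ks \<Longrightarrow> K \<subseteq> A" and ne: "Ks \<noteq> {}"
  shows "emeasure M A = (SUP K\<in>Ks. emeasure M K) \<longleftrightarrow> (\<forall>e>0. \<exists>K\<in>Ks. measure M (A - K) < e)"
proof
  assume SUP: "emeasure M A = (SUP K\<in>Ks. emeasure M K)"
  show "\<forall>e>0. \<exists>K\<in>Ks. measure M (A - K) < e"
  proof (intro allI impI)
    fix e :: real assume "0 < e"
    from SUP_approx_ennreal[OF this ne SUP] obtain K where K: "K \<in> Ks"
      and "emeasure M A < emeasure M K + ennreal e"
      using finite_measure.emeasure_finite[OF M] by auto
    then have "measure M A < measure M K + e"
      using \<open>0 < e\<close> by (simp add: finite_measure.emeasure_eq_measure[OF M] ennreal_less_iff flip: ennreal_plus)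
    moreover have "measure M (A - K) = measure M A - measure M K"
      using K A Ks sub by (intro measure_Diff) (auto simp: finite_measure.emeasure_finite[OF M])
    ultimately have "measure M (A - K) < e" by linarith
    with K show "\<exists>K\<in>Ks. measure M (A - K) < e" by blast
  qed
next
  assume approx: "\<forall>e>0. \<exists>K\<in>Ks. measure M (A - K) < e"
  show "emeasure M A = (SUP K\<in>Ks. emeasure M K)"
  proof (rule antisym)
    show "emeasure M A \<le> (SUP K\<in>Ks. emeasure M K)"
    proof (rule ennreal_le_epsilon)
      fix e :: real assume "0 < e"
      then obtain K where K: "K \<in> Ks" and "measure M (A - K) < e" using approx by blast
      moreover have "measure M A = measure M K + measure M (A - K)"
        using K A Ks sub by (subst finite_measure.finite_measure_Diff[OF M]) auto
      ultimately have "measure M A \<le> measure M K + e" by linarith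
      then have "emeasure M A \<le> emeasure M K + ennreal e"
        using \<open>0 < e\<close> by (simp add: finite_measure.emeasure_eq_measure[OF M] ennreal_leI flip: ennreal_plus)
      also have "emeasure M K \<le> (SUP K\<in>Ks. emeasure M K)" using K by (rule SUP_upper)
      finally show "emeasure M A \<le> (SUP K\<in>Ks. emeasure M K) + ennreal e" by simp
    qed
    show "(SUP K\<in>Ks. emeasure M K) \<le> emeasure M A"
      using A sub by (intro SUP_least emeasure_mono) auto
  qed
qed

lemma emeasure_eq_INF_iff_approx:
  assumes M: "finite_measure M" and A: "A \<in> sets M" and Us: "Us \<subseteq> sets M"
    and sup: "\<And>U. U \<in> Us \<Longrightarrow> A \<subseteq> U"
  shows "emeasure M A = (INF U\<in>Us. emeasure M U) \<longleftrightarrow> (\<forall>e>0. \<exists>U\<in>Us. measure M (U - A) < e)"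
proof
  assume INF: "emeasure M A = (INF U\<in>Us. emeasure M U)"
  show "\<forall>e>0. \<exists>U\<in>Us. measure M (U - A) < e"
  proof (intro allI impI)
    fix e :: real assume "0 < e"
    from INF_approx_ennreal[OF this INF] obtain U where U: "U \<in> Us"
      and "emeasure M U < emeasure M A + ennreal e"
      using finite_measure.emeasure_finite[OF M] by auto
    then have "measure M U < measure M A + e"
      using \<open>0 < e\<close> by (simp add: finite_measure.emeasure_eq_measure[OF M] ennreal_less_iff flip: ennreal_plus)
    moreover have "measure M (U - A) = measure M U - measure M A"
      using U A Us sup by (intro measure_Diff) (auto simp: finite_measure.emeasure_finite[OF M])
    ultimately have "measure M (U - A) < e" by linarith
    with U show "\<exists>U\<in>Us. measure M (U - A) < e" by blast
  qed
next
  assume approx: "\<forall>e>0. \<exists>U\<in>Us. measure M (U - A) < e"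
  show "emeasure M A = (INF U\<in>Us. emeasure M U)"
  proof (rule antisym)
    show "emeasure M A \<le> (INF U\<in>Us. emeasure M U)"
      using Us sup by (intro INF_greatest emeasure_mono) auto
    show "(INF U\<in>Us. emeasure M U) \<le> emeasure M A"
    proof (rule ennreal_le_epsilon)
      fix e :: real assume "0 < e"
      then obtain U where U: "U \<in> Us" and "measure M (U - A) < e" using approx by blast
      moreover have "measure M U = measure M A + measure M (U - A)"
        using U A Us sup by (subst finite_measure.finite_measure_Diff[OF M]) auto
      ultimately have "measure M U \<le> measure M A + e" by linarith
      then have "emeasure M U \<le> emeasure M A + ennreal e"
        using \<open>0 < e\<close> by (simp add: finite_measure.emeasure_eq_measure[OF M] ennreal_leI flip: ennreal_plus)
      moreover have "(INF U\<in>Us. emeasure M U) \<le> emeasure M U" using U by (rule INF_lower)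
      ultimately show "(INF U\<in>Us. emeasure M U) \<le> emeasure M A + ennreal e" by simp
    qed
  qed
qed

lemma compact_in_borel: "compact (K :: 'a::t2_space set) \<Longrightarrow> K \<in> sets borel"
  by (simp add: compact_imp_closed)

lemma approx_transfer_dominated:
  fixes C :: real
  assumes approx: "\<forall>d>0. \<exists>x\<in>X. measure N (f x) < d"
    and dominated: "\<And>x. x \<in> X \<Longrightarrow> measure \<nu> (f x) \<le> C * measure N (f x)"
  shows "\<forall>e>0. \<exists>x\<in>X. measure \<nu> (f x) < e"
proof (intro allI impI)
  fix e :: real assume "0 < e"
  then have "0 < e / (\<bar>C\<bar> + 1)" by simp
  with approx obtain x where x: "x \<in> X" and less: "measure N (f x) < e / (\<bar>C\<bar> + 1)"
    by blast
  have "measure \<nu> (f x) \<le> C * measure N (f x)" using x by (rule dominated)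
  also have "\<dots> \<le> \<bar>C\<bar> * measure N (f x)" by (intro mult_right_mono) auto
  also have "\<dots> \<le> \<bar>C\<bar> * (e / (\<bar>C\<bar> + 1))" using less by (intro mult_left_mono) auto
  also have "\<dots> < e" using \<open>0 < e\<close> by (simp add: field_simps)
  finally show "\<exists>x\<in>X. measure \<nu> (f x) < e" using x by blast
qed

lemma regular_borel_dominated:
  fixes N \<nu> :: "'a::t2_space measure"
  assumes N: "regular_borel N" "finite_measure N"
    and \<nu>: "sets \<nu> = sets borel" "finite_measure \<nu>"
    and dominated: "\<And>X. X \<in> sets borel \<Longrightarrow> measure \<nu> X \<le> C * measure N X"
  shows "regular_borel \<nu>"
  unfolding regular_borel_def
proof (intro conjI ballI \<nu>(1))
  fix A :: "'a set" assume A: "A \<in> sets borel"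
  have sets_N: "sets N = sets borel" using N(1) by (simp add: regular_borel_def)
  let ?Ks = "{K. compact K \<and> K \<subseteq> A}" and ?Us = "{U. open U \<and> A \<subseteq> U}"
  have Ks: "?Ks \<subseteq> sets borel" "\<And>K. K \<in> ?Ks \<Longrightarrow> K \<subseteq> A" "?Ks \<noteq> {}"
    by (auto intro: compact_in_borel)
  have Us: "?Us \<subseteq> sets borel" "\<And>U. U \<in> ?Us \<Longrightarrow> A \<subseteq> U"
    by auto
  have "emeasure N A = (SUP K\<in>?Ks. emeasure N K)"
    using N(1) A unfolding regular_borel_def by blast
  then have "\<forall>d>0. \<exists>K\<in>?Ks. measure N (A - K) < d"
    using emeasure_eq_SUP_iff_approx[OF N(2)] A Ks unfolding sets_N by blast
  then have "\<forall>e>0. \<exists>K\<in>?Ks. measure \<nu> (A - K) < e"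
    by (rule approx_transfer_dominated) (use A Ks(1) in \<open>blast intro: dominated\<close>)
  then show "emeasure \<nu> A = (SUP K\<in>?Ks. emeasure \<nu> K)"
    using emeasure_eq_SUP_iff_approx[OF \<nu>(2)] A Ks unfolding \<nu>(1) by blast
  have "emeasure N A = (INF U\<in>?Us. emeasure N U)"
    using N(1) A unfolding regular_borel_def by blast
  then have "\<forall>d>0. \<exists>U\<in>?Us. measure N (U - A) < d"
    using emeasure_eq_INF_iff_approx[OF N(2)] A Us unfolding sets_N by blast
  then have "\<forall>e>0. \<exists>U\<in>?Us. measure \<nu> (U - A) < e"
    by (rule approx_transfer_dominated) (use A Us(1) in \<open>blast intro: dominated\<close>)
  then show "emeasure \<nu> A = (INF U\<in>?Us. emeasure \<nu> U)"
    using emeasure_eq_INF_iff_approx[OF \<nu>(2)] A Us unfolding \<nu>(1) by blast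
qed

lemma Times_in_borel:
  fixes A :: "'a::topological_space set" and B :: "'b::topological_space set"
  assumes "A \<in> sets borel" "B \<in> sets borel"
  shows "A \<times> B \<in> sets borel"
proof -
  have "A \<times> B = fst -` A \<inter> snd -` B" by auto
  moreover have "fst \<in> borel_measurable borel" "snd \<in> borel_measurable borel"
    by (intro borel_measurable_continuous_onI continuous_intros)+
  ultimately show ?thesis using assms by (auto intro: measurable_sets_borel)
qed

lemma translate_eq_vimage:
  fixes y :: "'a::group_add"
  shows "(\<lambda>x. x + y) ` A = (\<lambda>x. x - y) -` A"
  by (force simp: image_iff intro: diff_add_cancel[symmetric])

lemma translate_in_borel:
  fixes y :: "'a::topological_group_add"
  assumes "A \<in> sets borel"
  shows "(\<lambda>x. x + y) ` A \<in> sets borel"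
  unfolding translate_eq_vimage
  by (rule measurable_sets_borel[OF _ assms]) (intro borel_measurable_continuous_onI continuous_intros)

lemma finite_borel_partition_translate:
  fixes y :: "'a::topological_group_add"
  assumes "finite_borel_partition \<E>"
  shows "finite_borel_partition ((\<lambda>E. (\<lambda>e. e + y) ` E) ` \<E>)"
proof -
  have "disjoint ((\<lambda>E. (\<lambda>e. e + y) ` E) ` \<E>)"
    using assms unfolding finite_borel_partition_def by (intro disjoint_image) auto
  moreover have "\<Union>((\<lambda>E. (\<lambda>e. e + y) ` E) ` \<E>) = (\<lambda>e. e + y) ` \<Union>\<E>"
    by (rule image_Union[symmetric])
  ultimately show ?thesis
    using assms unfolding finite_borel_partition_def by (auto simp: translate_in_borel)
qed

lemma sum_measure_Int_partition:
  assumes M: "finite_measure M" "sets M = sets borel"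
    and \<E>: "finite_borel_partition \<E>" and B: "B \<in> sets borel"
  shows "(\<Sum>E\<in>{E\<in>\<E>. 0 < measure M E}. measure M (B \<inter> E)) = measure M B"
proof -
  have fin: "finite \<E>" and sets_\<E>: "\<E> \<subseteq> sets borel" and "disjoint \<E>" "\<Union>\<E> = UNIV"
    using \<E> by (auto simp: finite_borel_partition_def)
  have "(\<Sum>E\<in>{E\<in>\<E>. 0 < measure M E}. measure M (B \<inter> E)) = (\<Sum>E\<in>\<E>. measure M (B \<inter> E))"
  proof (rule sum.mono_neutral_left[OF fin], blast, intro ballI)
    fix E assume E: "E \<in> \<E> - {E\<in>\<E>. 0 < measure M E}"
    then have "measure M (B \<inter> E) \<le> measure M E"
      using sets_\<E> B M by (intro finite_measure.finite_measure_mono) auto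
    moreover have "measure M E \<le> 0" using E by auto
    ultimately show "measure M (B \<inter> E) = 0" using measure_nonneg[of M "B \<inter> E"] by linarith
  qed
  also have "\<dots> = measure M (\<Union>E\<in>\<E>. B \<inter> E)"
    using \<open>disjoint \<E>\<close> sets_\<E> B M
    by (intro measure_finite_Union[symmetric] fin)
       (auto simp: disjoint_def disjoint_family_on_def finite_measure.emeasure_finite)
  also have "(\<Union>E\<in>\<E>. B \<inter> E) = B" using \<open>\<Union>\<E> = UNIV\<close> by blast
  finally show ?thesis .
qed

lemma emeasure_density_sum_indicator:
  assumes M: "finite_measure M" and "finite I" "\<And>i. i \<in> I \<Longrightarrow> R i \<in> sets M" "D \<in> sets M"
    and c: "\<And>i. i \<in> I \<Longrightarrow> 0 \<le> c i"
  shows "emeasure (density M (\<lambda>x. \<Sum>i\<in>I. ennreal (c i) * indicator (R i) x)) D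
           = ennreal (\<Sum>i\<in>I. c i * measure M (D \<inter> R i))"
proof -
  have "(\<lambda>x. \<Sum>i\<in>I. ennreal (c i) * indicator (R i) x) \<in> borel_measurable M"
    using assms(3) by (intro borel_measurable_sum borel_measurable_times_ennreal) auto
  then have "emeasure (density M (\<lambda>x. \<Sum>i\<in>I. ennreal (c i) * indicator (R i) x)) D
      = (\<integral>\<^sup>+x. (\<Sum>i\<in>I. ennreal (c i) * indicator (R i) x) * indicator D x \<partial>M)"
    using assms(4) by (rule emeasure_density)
  also have "\<dots> = (\<integral>\<^sup>+x. (\<Sum>i\<in>I. ennreal (c i) * indicator (D \<inter> R i) x) \<partial>M)"
    by (simp only: sum_distrib_left sum_distrib_right indicator_inter_arith mult_ac)
  also have "\<dots> = (\<Sum>i\<in>I. ennreal (c i) * emeasure M (D \<inter> R i))"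
    using assms(2-4) by (subst nn_integral_sum) (auto intro!: sum.cong nn_integral_cmult_indicator)
  also have "\<dots> = (\<Sum>i\<in>I. ennreal (c i * measure M (D \<inter> R i)))"
    using c by (intro sum.cong refl)
      (simp add: finite_measure.emeasure_eq_measure[OF M] ennreal_mult)
  also have "\<dots> = ennreal (\<Sum>i\<in>I. c i * measure M (D \<inter> R i))"
    using c by (intro sum_ennreal mult_nonneg_nonneg measure_nonneg)
  finally show ?thesis .
qed

locale haar_measure_pair =
  fixes lam :: "'a::{topological_group_add, t2_space} measure" and lam2 :: "('a \<times> 'a) measure"
  assumes haar_prob: "haar_prob lam" and haar_prod: "haar_prod lam lam2"
begin

lemma regular_borel_prob_lam: "regular_borel_prob lam"
  and regular_borel_prob_lam2: "regular_borel_prob lam2"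
  using haar_prob haar_prod by (simp_all add: haar_prob_def haar_prod_def)

lemma sets_lam: "sets lam = sets borel"
  using regular_borel_prob_lam by (simp add: regular_borel_prob_def regular_borel_def)

lemma sets_lam2: "sets lam2 = sets borel"
  using regular_borel_prob_lam2 by (simp add: regular_borel_prob_def regular_borel_def)

lemma prob_space_lam: "prob_space lam"
  using regular_borel_prob_lam by (simp add: regular_borel_prob_def)

lemma finite_measure_lam: "finite_measure lam"
  using prob_space_lam by (rule prob_space.finite_measure)

lemma regular_borel_lam2: "regular_borel lam2"
  and finite_measure_lam2: "finite_measure lam2"
  using regular_borel_prob_lam2 by (simp_all add: regular_borel_prob_def prob_space.finite_measure)

lemma measure_translate: "A \<in> sets borel \<Longrightarrow> measure lam ((\<lambda>x. x + y) ` A) = measure lam A"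
  using haar_prob by (simp add: haar_prob_def measure_def)

lemma measure_Times:
  "A \<in> sets borel \<Longrightarrow> B \<in> sets borel \<Longrightarrow> measure lam2 (A \<times> B) = measure lam A * measure lam B"
  using haar_prod by (simp add: haar_prod_def measure_def enn2real_mult)

definition coupling :: "'a set set \<Rightarrow> 'a \<Rightarrow> ('a \<times> 'a) measure" where
  "coupling \<E> y = density lam2 (\<lambda>p. \<Sum>E\<in>{E\<in>\<E>. 0 < measure lam E}.
     ennreal (1 / measure lam E) * indicator (E \<times> (\<lambda>e. e + y) ` E) p)"

lemma sets_coupling: "sets (coupling \<E> y) = sets borel"
  by (simp add: coupling_def sets_lam2)

lemma emeasure_coupling:
  assumes "finite_borel_partition \<E>" "D \<in> sets borel"
  shows "emeasure (coupling \<E> y) D = ennreal (\<Sum>E\<in>{E\<in>\<E>. 0 < measure lam E}.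
           measure lam2 (D \<inter> (E \<times> (\<lambda>e. e + y) ` E)) / measure lam E)"
proof -
  have "finite \<E>" "\<E> \<subseteq> sets borel"
    using assms(1) by (auto simp: finite_borel_partition_def)
  then have "emeasure (coupling \<E> y) D = ennreal (\<Sum>E\<in>{E\<in>\<E>. 0 < measure lam E}.
      1 / measure lam E * measure lam2 (D \<inter> (E \<times> (\<lambda>e. e + y) ` E)))"
    unfolding coupling_def using assms(2)
    by (intro emeasure_density_sum_indicator finite_measure_lam2)
      (auto simp: sets_lam2 Times_in_borel translate_in_borel)
  then show ?thesis by simp
qed

lemma measure_coupling:
  assumes "finite_borel_partition \<E>" "D \<in> sets borel"
  shows "measure (coupling \<E> y) D = (\<Sum>E\<in>{E\<in>\<E>. 0 < measure lam E}.
           measure lam2 (D \<inter> (E \<times> (\<lambda>e. e + y) ` E)) / measure lam E)"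
  by (subst measure_def, subst emeasure_coupling[OF assms])
    (intro enn2real_ennreal sum_nonneg divide_nonneg_nonneg measure_nonneg)

lemma measure_coupling_Times_UNIV:
  assumes \<E>: "finite_borel_partition \<E>" and B: "B \<in> sets borel"
  shows "measure (coupling \<E> y) (B \<times> UNIV) = measure lam B"
proof -
  let ?S = "{E\<in>\<E>. 0 < measure lam E}" and ?T = "\<lambda>E. (\<lambda>e. e + y) ` E"
  have sets_\<E>: "\<E> \<subseteq> sets borel" using \<E> by (simp add: finite_borel_partition_def)
  have "measure (coupling \<E> y) (B \<times> UNIV)
      = (\<Sum>E\<in>?S. measure lam2 ((B \<times> UNIV) \<inter> (E \<times> ?T E)) / measure lam E)"
    using B by (intro measure_coupling[OF \<E>] Times_in_borel) auto
  also have "\<dots> = (\<Sum>E\<in>?S. measure lam (B \<inter> E))"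
  proof (rule sum.cong[OF refl])
    fix E assume E: "E \<in> ?S"
    then have "E \<in> sets borel" using sets_\<E> by blast
    have "(B \<times> UNIV) \<inter> (E \<times> ?T E) = (B \<inter> E) \<times> ?T E" by auto
    also have "measure lam2 \<dots> = measure lam (B \<inter> E) * measure lam E"
      using B \<open>E \<in> sets borel\<close> by (simp add: measure_Times measure_translate translate_in_borel)
    finally show "measure lam2 ((B \<times> UNIV) \<inter> (E \<times> ?T E)) / measure lam E = measure lam (B \<inter> E)"
      using E by simp
  qed
  also have "\<dots> = measure lam B"
    using finite_measure_lam sets_lam \<E> B by (rule sum_measure_Int_partition)
  finally show ?thesis .
qed

lemma measure_coupling_UNIV_Times:
  assumes \<E>: "finite_borel_partition \<E>" and B: "B \<in> sets borel"
  shows "measure (coupling \<E> y) (UNIV \<times> B) = measure lam B"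
proof -
  let ?S = "{E\<in>\<E>. 0 < measure lam E}" and ?T = "\<lambda>E. (\<lambda>e. e + y) ` E"
  have sets_\<E>: "\<E> \<subseteq> sets borel" using \<E> by (simp add: finite_borel_partition_def)
  have "measure (coupling \<E> y) (UNIV \<times> B)
      = (\<Sum>E\<in>?S. measure lam2 ((UNIV \<times> B) \<inter> (E \<times> ?T E)) / measure lam E)"
    using B by (intro measure_coupling[OF \<E>] Times_in_borel) auto
  also have "\<dots> = (\<Sum>E\<in>?S. measure lam (B \<inter> ?T E))"
  proof (rule sum.cong[OF refl])
    fix E assume E: "E \<in> ?S"
    then have "E \<in> sets borel" using sets_\<E> by blast
    have "(UNIV \<times> B) \<inter> (E \<times> ?T E) = E \<times> (B \<inter> ?T E)" by auto
    also have "measure lam2 \<dots> = measure lam E * measure lam (B \<inter> ?T E)"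
      using B \<open>E \<in> sets borel\<close> by (intro measure_Times sets.Int translate_in_borel)
    finally show "measure lam2 ((UNIV \<times> B) \<inter> (E \<times> ?T E)) / measure lam E = measure lam (B \<inter> ?T E)"
      using E by simp
  qed
  also have "\<dots> = (\<Sum>F\<in>{F\<in>?T ` \<E>. 0 < measure lam F}. measure lam (B \<inter> F))"
  proof (rule sum.reindex_cong[symmetric])
    show "inj_on ?T ?S"
    proof (rule inj_onI)
      fix E F assume "?T E = ?T F"
      then have "(\<lambda>x. x - y) ` ?T E = (\<lambda>x. x - y) ` ?T F" by (rule arg_cong)
      then show "E = F" by (simp add: image_image)
    qed
    show "{F\<in>?T ` \<E>. 0 < measure lam F} = ?T ` ?S"
      using sets_\<E> by (auto simp: measure_translate)
  qed (rule refl)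
  also have "\<dots> = measure lam B"
    using finite_measure_lam sets_lam finite_borel_partition_translate[OF \<E>] B
    by (rule sum_measure_Int_partition)
  finally show ?thesis .
qed

lemma prob_space_coupling:
  assumes \<E>: "finite_borel_partition \<E>"
  shows "prob_space (coupling \<E> y)"
proof
  have top: "(UNIV :: 'a set) \<times> UNIV \<in> sets borel" by simp
  have "space (coupling \<E> y) = UNIV \<times> UNIV"
    using sets_eq_imp_space_eq[OF sets_coupling] by simp
  moreover have "emeasure (coupling \<E> y) (UNIV \<times> UNIV) = ennreal (measure (coupling \<E> y) (UNIV \<times> UNIV))"
    by (simp only: emeasure_coupling[OF \<E> top] measure_coupling[OF \<E> top])
  moreover have "measure (coupling \<E> y) (UNIV \<times> UNIV) = 1"
    using measure_coupling_Times_UNIV[OF \<E>, of UNIV] prob_space.prob_space[OF prob_space_lam]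
      sets_eq_imp_space_eq[OF sets_lam] by simp
  ultimately show "emeasure (coupling \<E> y) (space (coupling \<E> y)) = 1" by simp
qed

lemma regular_borel_coupling:
  assumes \<E>: "finite_borel_partition \<E>"
  shows "regular_borel (coupling \<E> y)"
proof (rule regular_borel_dominated[OF regular_borel_lam2 finite_measure_lam2 sets_coupling])
  let ?S = "{E\<in>\<E>. 0 < measure lam E}"
  show "finite_measure (coupling \<E> y)"
    using prob_space_coupling[OF \<E>] by (rule prob_space.finite_measure)
  fix X :: "('a \<times> 'a) set" assume X: "X \<in> sets borel"
  have "measure (coupling \<E> y) X \<le> (\<Sum>E\<in>?S. measure lam2 X / measure lam E)"
    unfolding measure_coupling[OF \<E> X]
  proof (rule sum_mono)
    fix E assume "E \<in> ?S"
    have "measure lam2 (X \<inter> (E \<times> (\<lambda>e. e + y) ` E)) \<le> measure lam2 X"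
      using X by (intro finite_measure.finite_measure_mono[OF finite_measure_lam2]) (auto simp: sets_lam2)
    then show "measure lam2 (X \<inter> (E \<times> (\<lambda>e. e + y) ` E)) / measure lam E \<le> measure lam2 X / measure lam E"
      by (rule divide_right_mono) simp
  qed
  also have "\<dots> = (\<Sum>E\<in>?S. 1 / measure lam E) * measure lam2 X"
    by (simp add: sum_distrib_right)
  finally show "measure (coupling \<E> y) X \<le> (\<Sum>E\<in>?S. 1 / measure lam E) * measure lam2 X" .
qed

end

theorem lemma3p2:
  fixes lam :: "'a::{topological_group_add, t2_space} measure"
    and lam2 :: "('a \<times> 'a) measure"
    and \<E> :: "'a set set"
    and y :: 'a
  assumes "compact (UNIV :: 'a set)"
    and "haar_prob lam"
    and "haar_prod lam lam2"
    and "finite_borel_partition \<E>"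
  shows "\<exists>\<nu> :: ('a \<times> 'a) measure.
           sets \<nu> = sets borel \<and>
           (\<forall>D \<in> sets borel. emeasure \<nu> D =
              ennreal (\<Sum>E \<in> {E \<in> \<E>. measure lam E > 0}.
                 measure lam2 (D \<inter> (E \<times> ((\<lambda>e. e + y) ` E))) / measure lam E)) \<and>
           regular_borel_prob \<nu> \<and>
           (\<forall>B \<in> sets borel. measure \<nu> (B \<times> UNIV) = measure lam B \<and>
                              measure \<nu> (UNIV \<times> B) = measure lam B)"
proof -
  interpret haar_measure_pair lam lam2
    using assms(2,3) by unfold_locales
  have \<E>: "finite_borel_partition \<E>" by (fact assms(4))
  show ?thesis
  proof (intro exI conjI ballI)
    show "sets (coupling \<E> y) = sets borel" by (rule sets_coupling)
    show "regular_borel_prob (coupling \<E> y)"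
      unfolding regular_borel_prob_def
      using regular_borel_coupling[OF \<E>] prob_space_coupling[OF \<E>] ..
  next
    fix D :: "('a \<times> 'a) set" assume "D \<in> sets borel"
    then show "emeasure (coupling \<E> y) D = ennreal (\<Sum>E \<in> {E \<in> \<E>. measure lam E > 0}.
        measure lam2 (D \<inter> (E \<times> ((\<lambda>e. e + y) ` E))) / measure lam E)"
      by (rule emeasure_coupling[OF \<E>])
  next
    fix B :: "'a set" assume "B \<in> sets borel"
    then show "measure (coupling \<E> y) (B \<times> UNIV) = measure lam B"
      and "measure (coupling \<E> y) (UNIV \<times> B) = measure lam B"
      by (rule measure_coupling_Times_UNIV[OF \<E>] measure_coupling_UNIV_Times[OF \<E>])+
  qed
qed

end
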